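(* Let $\mathbf{C}$ be a category. There is a one-to-one correspondence $h$ from the set of lax functors $\mathbf{C}\to\mathbf{Rel}$ to the set of faithful functors with codomain $\mathbf{C}$.
   Context: $\mathbf{Rel}$ is the 2-category whose objects are sets, whose 1-morphisms $X\to Y$ are binary relations $\mathcal{R}\subseteq X\times Y$, and whose 2-morphisms are inclusions of relations; composition of $\mathcal{R}\colon X\to Y$ and $\mathcal{R}'\colon Y\to Z$ is $\mathcal{R}'\circ\mathcal{R}=\{(x,z)\mid \exists y,\ (x,y)\in\mathcal{R},\ (y,z)\in\mathcal{R}'\}$. A lax functor $F\colon\mathbf{C}\to\mathbf{Rel}$ from a 1-category $\mathbf{C}$ assigns to each object $X$ a set $F(X)$ and to each morphism $f\colon X\to Y$ a relation $F(f)\colon F(X)\to F(Y)$ such that for every composable pair $f\colon X\to Y$, $g\colon Y\to Z$, the relation $F(g)\circ F(f)$ is included in $F(gf)$. The correspondence is given as follows: to a lax functor $S$ one associates the category $\mathbf{H(S)}$ whose objects are the elements $s\in S(e)$ for objects $e$ of $\mathbf{C}$ and whose morphisms are triples $(s,g,s')$ with $g\colon e\to e'$ in $\mathbf{C}$, $s\in S(e)$, $s'\in S(e')$ and $(s,s')\in S(g)$, composed by $(s',g',s'')(s,g,s')=(s,g'g,s'')$, together with the functor $h(S)\colon\mathbf{H(S)}\to\mathbf{C}$ sending $s\in S(e)$ to $e$ and $(s,g,s')$ to $g$; conversely a faithful functor $k\colon\mathbf{K}\to\mathbf{C}$ corresponds to the lax functor $S'$ with $S'(e)$ the set of objects of $\mathbf{K}$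 mapped to $e$ by $k$, and $(s,s')\in S'(g)$ iff there is $f\colon s\to s'$ in $\mathbf{K}$ with $k(f)=g$.
   Formalization: A lax functor F also satisfies the unit condition that F of the identity of X contains the identity relation on F(X); faithful functors with codomain C count up to isomorphism over C. The statement above fails without it. *)

theory Defs
  imports Main
begin

text \<open>Small categories (1-categories) given by explicit carriers.
  cComp C g f is the composite "g after f".\<close>

record ('o, 'm) cat =
  cObj  :: "'o set"
  cMor  :: "'m set"
  cDom  :: "'m \<Rightarrow> 'o"
  cCod  :: "'m \<Rightarrow> 'o"
  cId   :: "'o \<Rightarrow> 'm"
  cComp :: "'m \<Rightarrow> 'm \<Rightarrow> 'm"

definition category :: "('o, 'm) cat \<Rightarrow> bool" where
  "category C \<longleftrightarrow>
     (\<forall>f\<in>cMor C. cDom C f \<in> cObj C \<and> cCod C f \<in> cObj C) \<and>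
     (\<forall>x\<in>cObj C. cId C x \<in> cMor C \<and> cDom C (cId C x) = x \<and> cCod C (cId C x) = x) \<and>
     (\<forall>f\<in>cMor C. \<forall>g\<in>cMor C. cCod C f = cDom C g \<longrightarrow>
        cComp C g f \<in> cMor C \<and> cDom C (cComp C g f) = cDom C f \<and> cCod C (cComp C g f) = cCod C g) \<and>
     (\<forall>f\<in>cMor C. cComp C (cId C (cCod C f)) f = f \<and> cComp C f (cId C (cDom C f)) = f) \<and>
     (\<forall>f\<in>cMor C. \<forall>g\<in>cMor C. \<forall>h\<in>cMor C. cCod C f = cDom C g \<longrightarrow> cCod C g = cDom C h \<longrightarrow>
        cComp C h (cComp C g f) = cComp C (cComp C h g) f)"

definition is_functor :: "('o, 'm) cat \<Rightarrow> ('p, 'n) cat \<Rightarrow> ('o \<Rightarrow> 'p) \<Rightarrow> ('m \<Rightarrow> 'n) \<Rightarrow> bool" where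
  "is_functor C D Fo Fm \<longleftrightarrow>
     (\<forall>x\<in>cObj C. Fo x \<in> cObj D) \<and>
     (\<forall>f\<in>cMor C. Fm f \<in> cMor D \<and> cDom D (Fm f) = Fo (cDom C f) \<and> cCod D (Fm f) = Fo (cCod C f)) \<and>
     (\<forall>x\<in>cObj C. Fm (cId C x) = cId D (Fo x)) \<and>
     (\<forall>f\<in>cMor C. \<forall>g\<in>cMor C. cCod C f = cDom C g \<longrightarrow> Fm (cComp C g f) = cComp D (Fm g) (Fm f))"

definition faithful_functor :: "('o, 'm) cat \<Rightarrow> ('p, 'n) cat \<Rightarrow> ('o \<Rightarrow> 'p) \<Rightarrow> ('m \<Rightarrow> 'n) \<Rightarrow> bool" where
  "faithful_functor C D Fo Fm \<longleftrightarrow> is_functor C D Fo Fm \<and>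
     (\<forall>f\<in>cMor C. \<forall>g\<in>cMor C. cDom C f = cDom C g \<and> cCod C f = cCod C g \<and> Fm f = Fm g \<longrightarrow> f = g)"

text \<open>In Isabelle, relational composition "r O s" first applies r then s, so
  S(g) \<circ> S(f) is written  Sm f O Sm g.\<close>

definition lax_functor :: "('o, 'm) cat \<Rightarrow> ('o \<Rightarrow> 'a set) \<Rightarrow> ('m \<Rightarrow> ('a \<times> 'a) set) \<Rightarrow> bool" where
  "lax_functor C So Sm \<longleftrightarrow>
     (\<forall>f\<in>cMor C. Sm f \<subseteq> So (cDom C f) \<times> So (cCod C f)) \<and>
     (\<forall>x\<in>cObj C. Id_on (So x) \<subseteq> Sm (cId C x)) \<and>
     (\<forall>f\<in>cMor C. \<forall>g\<in>cMor C. cCod C f = cDom C g \<longrightarrow> Sm f O Sm g \<subseteq> Sm (cComp C g f))"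

text \<open>The category H(S): objects are elements s \<in> S(e) (tagged by e, i.e. disjoint union),
  morphisms are triples (s, g, s') with (s, s') \<in> S(g).\<close>

definition H_cat :: "('o, 'm) cat \<Rightarrow> ('o \<Rightarrow> 'a set) \<Rightarrow> ('m \<Rightarrow> ('a \<times> 'a) set)
    \<Rightarrow> ('o \<times> 'a, ('o \<times> 'a) \<times> 'm \<times> ('o \<times> 'a)) cat" where
  "H_cat C So Sm =
     \<lparr> cObj = Sigma (cObj C) So,
       cMor = {((e, s), g, (e', s')) | e s g e' s'.
                 g \<in> cMor C \<and> e = cDom C g \<and> e' = cCod C g \<and>
                 s \<in> So e \<and> s' \<in> So e' \<and> (s, s') \<in> Sm g},
       cDom = (\<lambda>(x, g, y). x),
       cCod = (\<lambda>(x, g, y). y),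
       cId = (\<lambda>x. (x, cId C (fst x), x)),
       cComp = (\<lambda>(y', g', z) (x, g, y). (x, cComp C g' g, z)) \<rparr>"

text \<open>The functor h(S): H(S) \<rightarrow> C has object map fst and morphism map hMor.\<close>

definition hMor :: "('o \<times> 'a) \<times> 'm \<times> ('o \<times> 'a) \<Rightarrow> 'm" where
  "hMor = (\<lambda>(x, g, y). g)"

definition fiber_obj :: "('p, 'n) cat \<Rightarrow> ('p \<Rightarrow> 'o) \<Rightarrow> 'o \<Rightarrow> 'p set" where
  "fiber_obj K ko e = {x \<in> cObj K. ko x = e}"

definition fiber_rel :: "('p, 'n) cat \<Rightarrow> ('n \<Rightarrow> 'm) \<Rightarrow> 'm \<Rightarrow> ('p \<times> 'p) set" where
  "fiber_rel K km g = {(x, y). \<exists>f\<in>cMor K. cDom K f = x \<and> cCod K f = y \<and> km f = g}"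

definition iso_over :: "('p, 'n) cat \<Rightarrow> ('p \<Rightarrow> 'o) \<Rightarrow> ('n \<Rightarrow> 'm)
    \<Rightarrow> ('q, 'r) cat \<Rightarrow> ('q \<Rightarrow> 'o) \<Rightarrow> ('r \<Rightarrow> 'm) \<Rightarrow> bool" where
  "iso_over K ko km L lo lm \<longleftrightarrow>
     (\<exists>Po Pm Qo Qm. is_functor K L Po Pm \<and> is_functor L K Qo Qm \<and>
        (\<forall>x\<in>cObj K. Qo (Po x) = x) \<and> (\<forall>f\<in>cMor K. Qm (Pm f) = f) \<and>
        (\<forall>y\<in>cObj L. Po (Qo y) = y) \<and> (\<forall>f\<in>cMor L. Pm (Qm f) = f) \<and>
        (\<forall>x\<in>cObj K. lo (Po x) = ko x) \<and> (\<forall>f\<in>cMor K. lm (Pm f) = km f))"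

end

theory Submission
  imports Defs
begin

text \<open>A morphism (s, g, s') of H(S) is determined by its endpoints and g, so h(S) is faithful,
  and the fibres of h(S) over e and over g are copies of S(e) and S(g), so S is recovered from
  h(S). Conversely, for faithful k : K \<rightarrow> C the map f \<mapsto> (dom f, k f, cod f) is injective by
  faithfulness and onto the morphisms of H(S') by the definition of S', and together with
  x \<mapsto> (k x, x) it is an isomorphism K \<cong> H(S') over C.\<close>

lemma H_cat_simps:
  "cObj (H_cat C So Sm) = Sigma (cObj C) So"
  "cMor (H_cat C So Sm) = {((e, s), g, (e', s')) | e s g e' s'.
                 g \<in> cMor C \<and> e = cDom C g \<and> e' = cCod C g \<and>
                 s \<in> So e \<and> s' \<in> So e' \<and> (s, s') \<in> Sm g}"
  "cDom (H_cat C So Sm) = (\<lambda>(x, g, y). x)"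
  "cCod (H_cat C So Sm) = (\<lambda>(x, g, y). y)"
  "cId (H_cat C So Sm) = (\<lambda>x. (x, cId C (fst x), x))"
  "cComp (H_cat C So Sm) = (\<lambda>(y', g', z) (x, g, y). (x, cComp C g' g, z))"
  by (simp_all add: H_cat_def)

lemma lax_functor_rel_subset:
  "lax_functor C So Sm \<Longrightarrow> g \<in> cMor C \<Longrightarrow> Sm g \<subseteq> So (cDom C g) \<times> So (cCod C g)"
  by (simp add: lax_functor_def)

lemma lax_functor_Id_mem:
  "lax_functor C So Sm \<Longrightarrow> e \<in> cObj C \<Longrightarrow> s \<in> So e \<Longrightarrow> (s, s) \<in> Sm (cId C e)"
  unfolding lax_functor_def by blast

lemma lax_functor_comp_mem:
  "lax_functor C So Sm \<Longrightarrow> f \<in> cMor C \<Longrightarrow> g \<in> cMor C \<Longrightarrow> cCod C f = cDom C g \<Longrightarrow>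
    (s, t) \<in> Sm f \<Longrightarrow> (t, u) \<in> Sm g \<Longrightarrow> (s, u) \<in> Sm (cComp C g f)"
  unfolding lax_functor_def by blast

lemma H_cat_Mor_iff:
  assumes "lax_functor C So Sm"
  shows "h \<in> cMor (H_cat C So Sm) \<longleftrightarrow>
    (\<exists>s g s'. h = ((cDom C g, s), g, (cCod C g, s')) \<and> g \<in> cMor C \<and> (s, s') \<in> Sm g)"
  using lax_functor_rel_subset[OF assms] unfolding H_cat_simps by blast

lemma category_H_cat:
  assumes C: "category C" and S: "lax_functor C So Sm"
  shows "category (H_cat C So Sm)"
proof -
  note Cd = C[unfolded category_def]
  note mem = H_cat_Mor_iff[OF S]
  show ?thesis
    unfolding category_def
  proof (intro conjI ballI impI)
    fix f assume "f \<in> cMor (H_cat C So Sm)"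
    then obtain s g s' where f: "f = ((cDom C g, s), g, (cCod C g, s'))" "g \<in> cMor C" "(s, s') \<in> Sm g"
      using mem by blast
    then have "s \<in> So (cDom C g)" "s' \<in> So (cCod C g)" using lax_functor_rel_subset[OF S] by auto
    then show "cDom (H_cat C So Sm) f \<in> cObj (H_cat C So Sm)"
      "cCod (H_cat C So Sm) f \<in> cObj (H_cat C So Sm)"
      using f Cd by (auto simp: H_cat_simps)
    show "cComp (H_cat C So Sm) (cId (H_cat C So Sm) (cCod (H_cat C So Sm) f)) f = f"
      "cComp (H_cat C So Sm) f (cId (H_cat C So Sm) (cDom (H_cat C So Sm) f)) = f"
      using f Cd by (auto simp: H_cat_simps)
  next
    fix x assume "x \<in> cObj (H_cat C So Sm)"
    then obtain e s where x: "x = (e, s)" "e \<in> cObj C" "s \<in> So e" by (auto simp: H_cat_simps)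
    then have "(s, s) \<in> Sm (cId C e)" using lax_functor_Id_mem[OF S] by blast
    moreover have "cId C e \<in> cMor C" "cDom C (cId C e) = e" "cCod C (cId C e) = e" using Cd x by auto
    ultimately show "cId (H_cat C So Sm) x \<in> cMor (H_cat C So Sm)"
      "cDom (H_cat C So Sm) (cId (H_cat C So Sm) x) = x"
      "cCod (H_cat C So Sm) (cId (H_cat C So Sm) x) = x"
      unfolding mem using x by (auto simp: H_cat_simps)
  next
    fix f g assume "f \<in> cMor (H_cat C So Sm)" "g \<in> cMor (H_cat C So Sm)"
      and fg: "cCod (H_cat C So Sm) f = cDom (H_cat C So Sm) g"
    then obtain s a s' t b t' where f: "f = ((cDom C a, s), a, (cCod C a, s'))" "a \<in> cMor C" "(s, s') \<in> Sm a"
      and g: "g = ((cDom C b, t), b, (cCod C b, t'))" "b \<in> cMor C" "(t, t') \<in> Sm b"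
      using mem by meson
    have ab: "cCod C a = cDom C b" "s' = t" using fg f g by (auto simp: H_cat_simps)
    have "(s, t') \<in> Sm (cComp C b a)" using lax_functor_comp_mem[OF S] f g ab by blast
    moreover have "cComp C b a \<in> cMor C" "cDom C (cComp C b a) = cDom C a" "cCod C (cComp C b a) = cCod C b"
      using Cd f g ab by auto
    ultimately show "cComp (H_cat C So Sm) g f \<in> cMor (H_cat C So Sm)"
      "cDom (H_cat C So Sm) (cComp (H_cat C So Sm) g f) = cDom (H_cat C So Sm) f"
      "cCod (H_cat C So Sm) (cComp (H_cat C So Sm) g f) = cCod (H_cat C So Sm) g"
      unfolding mem using f g by (auto simp: H_cat_simps)
  next
    fix f g h assume "f \<in> cMor (H_cat C So Sm)" "g \<in> cMor (H_cat C So Sm)" "h \<in> cMor (H_cat C So Sm)"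
      and fg: "cCod (H_cat C So Sm) f = cDom (H_cat C So Sm) g"
      and gh: "cCod (H_cat C So Sm) g = cDom (H_cat C So Sm) h"
    then obtain s a s' t b t' u c u' where f: "f = ((cDom C a, s), a, (cCod C a, s'))" "a \<in> cMor C"
      and g: "g = ((cDom C b, t), b, (cCod C b, t'))" "b \<in> cMor C"
      and h: "h = ((cDom C c, u), c, (cCod C c, u'))" "c \<in> cMor C"
      using mem by meson
    have "cCod C a = cDom C b" "cCod C b = cDom C c" using fg gh f g h by (auto simp: H_cat_simps)
    then show "cComp (H_cat C So Sm) h (cComp (H_cat C So Sm) g f) =
          cComp (H_cat C So Sm) (cComp (H_cat C So Sm) h g) f"
      using Cd f g h by (auto simp: H_cat_simps)
  qed
qed

lemma faithful_functor_hMor: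
  assumes "category C"
  shows "faithful_functor (H_cat C So Sm) C fst hMor"
  using assms unfolding faithful_functor_def is_functor_def category_def H_cat_simps hMor_def
  by auto

lemma fiber_obj_H_cat:
  assumes "e \<in> cObj C"
  shows "fiber_obj (H_cat C So Sm) fst e = Pair e ` So e"
  using assms unfolding fiber_obj_def H_cat_simps by auto

lemma fiber_rel_H_cat:
  assumes "lax_functor C So Sm" and "g \<in> cMor C"
  shows "fiber_rel (H_cat C So Sm) hMor g = (\<lambda>(s, s'). ((cDom C g, s), (cCod C g, s'))) ` Sm g"
  using assms lax_functor_rel_subset[OF assms]
  unfolding fiber_rel_def H_cat_simps hMor_def by (auto simp: image_iff)

lemma H_cat_inject_obj:
  assumes eq: "H_cat C So Sm = H_cat C To Tm" and e: "e \<in> cObj C"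
  shows "So e = To e"
proof -
  have "Pair e ` So e = fiber_obj (H_cat C So Sm) fst e" using e by (rule fiber_obj_H_cat[symmetric])
  also have "\<dots> = Pair e ` To e" unfolding eq using e by (rule fiber_obj_H_cat)
  finally have pairs: "Pair e ` So e = Pair e ` To e" .
  have "inj (Pair e)" by (rule injI) simp
  then show ?thesis using pairs by (rule inj_image_eq_iff[THEN iffD1])
qed

lemma H_cat_inject_rel:
  assumes S: "lax_functor C So Sm" and T: "lax_functor C To Tm"
    and eq: "H_cat C So Sm = H_cat C To Tm" and g: "g \<in> cMor C"
  shows "Sm g = Tm g"
proof -
  let ?tag = "\<lambda>(s, s'). ((cDom C g, s), (cCod C g, s'))"
  have "?tag ` Sm g = fiber_rel (H_cat C So Sm) hMor g" using S g by (rule fiber_rel_H_cat[symmetric])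
  also have "\<dots> = ?tag ` Tm g" unfolding eq using T g by (rule fiber_rel_H_cat)
  finally have tags: "?tag ` Sm g = ?tag ` Tm g" .
  have "inj ?tag" by (rule injI) auto
  then show ?thesis using tags by (rule inj_image_eq_iff[THEN iffD1])
qed

lemma lax_functor_fibers:
  assumes K: "category K" and k: "is_functor K C ko km"
  shows "lax_functor C (fiber_obj K ko) (fiber_rel K km)"
proof -
  note Kd = K[unfolded category_def]
  note kd = k[unfolded is_functor_def]
  show ?thesis
    unfolding lax_functor_def
  proof (intro conjI ballI impI subsetI)
    fix f p assume "f \<in> cMor C" "p \<in> fiber_rel K km f"
    then show "p \<in> fiber_obj K ko (cDom C f) \<times> fiber_obj K ko (cCod C f)"
      unfolding fiber_rel_def fiber_obj_def using Kd kd by auto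
  next
    fix e p assume "e \<in> cObj C" "p \<in> Id_on (fiber_obj K ko e)"
    then obtain x where p: "p = (x, x)" "x \<in> cObj K" "ko x = e"
      by (auto simp: Id_on_def fiber_obj_def)
    then have "cId K x \<in> cMor K" "cDom K (cId K x) = x" "cCod K (cId K x) = x" "km (cId K x) = cId C e"
      using Kd kd by auto
    then show "p \<in> fiber_rel K km (cId C e)" unfolding fiber_rel_def p by blast
  next
    fix f g p assume "f \<in> cMor C" "g \<in> cMor C" "cCod C f = cDom C g"
      and "p \<in> fiber_rel K km f O fiber_rel K km g"
    then obtain f' g' where p: "p = (cDom K f', cCod K g')" "cCod K f' = cDom K g'"
      and f': "f' \<in> cMor K" "km f' = f" and g': "g' \<in> cMor K" "km g' = g"
      by (force simp: fiber_rel_def)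
    then have "cComp K g' f' \<in> cMor K" "cDom K (cComp K g' f') = cDom K f'"
      "cCod K (cComp K g' f') = cCod K g'" "km (cComp K g' f') = cComp C g f"
      using Kd kd by auto
    then show "p \<in> fiber_rel K km (cComp C g f)" unfolding fiber_rel_def p by blast
  qed
qed

lemma is_functor_the_inv_into:
  assumes K: "category K" and P: "is_functor K L Po Pm"
    and obj: "bij_betw Po (cObj K) (cObj L)" and mor: "bij_betw Pm (cMor K) (cMor L)"
  shows "is_functor L K (the_inv_into (cObj K) Po) (the_inv_into (cMor K) Pm)"
proof -
  note Kd = K[unfolded category_def]
  note Pd = P[unfolded is_functor_def]
  let ?Qo = "the_inv_into (cObj K) Po" and ?Qm = "the_inv_into (cMor K) Pm"
  have Qo: "?Qo (Po x) = x" if "x \<in> cObj K" for x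
    using obj that by (simp add: bij_betw_def the_inv_into_f_f)
  have Qm: "?Qm (Pm f) = f" if "f \<in> cMor K" for f
    using mor that by (simp add: bij_betw_def the_inv_into_f_f)
  have mor_cases: "\<exists>f\<in>cMor K. h = Pm f" if "h \<in> cMor L" for h
    using mor that by (auto simp: bij_betw_def)
  show ?thesis
    unfolding is_functor_def
  proof (intro conjI ballI impI)
    show "?Qo y \<in> cObj K" if "y \<in> cObj L" for y
      using bij_betw_the_inv_into[OF obj] that by (rule bij_betw_apply)
    fix h assume "h \<in> cMor L"
    then obtain f where f: "f \<in> cMor K" "h = Pm f" using mor_cases by blast
    then show "?Qm h \<in> cMor K" "cDom K (?Qm h) = ?Qo (cDom L h)" "cCod K (?Qm h) = ?Qo (cCod L h)"
      using Kd Pd Qo Qm by auto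
  next
    fix y assume "y \<in> cObj L"
    then obtain x where x: "x \<in> cObj K" "y = Po x" using obj by (auto simp: bij_betw_def)
    then have "cId L y = Pm (cId K x)" using Pd by simp
    then show "?Qm (cId L y) = cId K (?Qo y)" using x Kd Qo Qm by simp
  next
    fix h1 h2 assume "h1 \<in> cMor L" "h2 \<in> cMor L" and h12: "cCod L h1 = cDom L h2"
    then obtain f g where f: "f \<in> cMor K" "h1 = Pm f" and g: "g \<in> cMor K" "h2 = Pm g"
      using mor_cases by meson
    have "Po (cCod K f) = Po (cDom K g)" using h12 f g Pd by auto
    then have fg: "cCod K f = cDom K g"
      using obj f g Kd by (auto simp: bij_betw_def dest: inj_onD)
    then have "cComp L h2 h1 = Pm (cComp K g f)" using f g Pd by simp
    then show "?Qm (cComp L h2 h1) = cComp K (?Qm h2) (?Qm h1)" using f g fg Kd Qm by simp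
  qed
qed

lemma iso_overI:
  assumes K: "category K" and P: "is_functor K L Po Pm"
    and obj: "bij_betw Po (cObj K) (cObj L)" and mor: "bij_betw Pm (cMor K) (cMor L)"
    and "\<And>x. x \<in> cObj K \<Longrightarrow> lo (Po x) = ko x" and "\<And>f. f \<in> cMor K \<Longrightarrow> lm (Pm f) = km f"
  shows "iso_over K ko km L lo lm"
  unfolding iso_over_def
  using assms is_functor_the_inv_into[OF K P obj mor]
  by (intro exI[of _ Po] exI[of _ Pm] exI[of _ "the_inv_into (cObj K) Po"]
      exI[of _ "the_inv_into (cMor K) Pm"])
     (auto simp: bij_betw_def the_inv_into_f_f f_the_inv_into_f)

definition H_comparison_mor ::
    "('p, 'n) cat \<Rightarrow> ('p \<Rightarrow> 'o) \<Rightarrow> ('n \<Rightarrow> 'm) \<Rightarrow> 'n \<Rightarrow> ('o \<times> 'p) \<times> 'm \<times> ('o \<times> 'p)" where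
  "H_comparison_mor K ko km f = ((ko (cDom K f), cDom K f), km f, (ko (cCod K f), cCod K f))"

lemma is_functor_H_comparison:
  assumes K: "category K" and k: "is_functor K C ko km"
  shows "is_functor K (H_cat C (fiber_obj K ko) (fiber_rel K km)) (\<lambda>x. (ko x, x)) (H_comparison_mor K ko km)"
proof -
  note Kd = K[unfolded category_def]
  note kd = k[unfolded is_functor_def]
  show ?thesis
    unfolding is_functor_def
  proof (intro conjI ballI impI)
    show "(ko x, x) \<in> cObj (H_cat C (fiber_obj K ko) (fiber_rel K km))" if "x \<in> cObj K" for x
      using that kd by (simp add: H_cat_simps fiber_obj_def)
    fix f assume f: "f \<in> cMor K"
    then show "H_comparison_mor K ko km f \<in> cMor (H_cat C (fiber_obj K ko) (fiber_rel K km))"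
      using Kd kd unfolding H_cat_simps H_comparison_mor_def fiber_obj_def fiber_rel_def by fastforce
    show "cDom (H_cat C (fiber_obj K ko) (fiber_rel K km)) (H_comparison_mor K ko km f) = (ko (cDom K f), cDom K f)"
      "cCod (H_cat C (fiber_obj K ko) (fiber_rel K km)) (H_comparison_mor K ko km f) = (ko (cCod K f), cCod K f)"
      by (simp_all add: H_cat_simps H_comparison_mor_def)
  next
    fix x assume "x \<in> cObj K"
    then show "H_comparison_mor K ko km (cId K x) = cId (H_cat C (fiber_obj K ko) (fiber_rel K km)) (ko x, x)"
      using Kd kd by (simp add: H_cat_simps H_comparison_mor_def)
  next
    fix f g assume "f \<in> cMor K" "g \<in> cMor K" "cCod K f = cDom K g"
    then show "H_comparison_mor K ko km (cComp K g f) =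
        cComp (H_cat C (fiber_obj K ko) (fiber_rel K km)) (H_comparison_mor K ko km g) (H_comparison_mor K ko km f)"
      using Kd kd by (simp add: H_cat_simps H_comparison_mor_def)
  qed
qed

lemma bij_betw_H_comparison_mor:
  assumes K: "category K" and k: "faithful_functor K C ko km"
  shows "bij_betw (H_comparison_mor K ko km) (cMor K) (cMor (H_cat C (fiber_obj K ko) (fiber_rel K km)))"
  unfolding bij_betw_def
proof
  show "inj_on (H_comparison_mor K ko km) (cMor K)"
    using k by (auto intro: inj_onI simp: faithful_functor_def H_comparison_mor_def)
  have "is_functor K C ko km" using k by (simp add: faithful_functor_def)
  then have "H_comparison_mor K ko km ` cMor K \<subseteq> cMor (H_cat C (fiber_obj K ko) (fiber_rel K km))"
    using is_functor_H_comparison[OF K] unfolding is_functor_def by blast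
  moreover have "cMor (H_cat C (fiber_obj K ko) (fiber_rel K km)) \<subseteq> H_comparison_mor K ko km ` cMor K"
    unfolding H_cat_simps fiber_obj_def fiber_rel_def H_comparison_mor_def by force
  ultimately show "H_comparison_mor K ko km ` cMor K = cMor (H_cat C (fiber_obj K ko) (fiber_rel K km))"
    by blast
qed

lemma iso_over_H_cat_fibers:
  assumes K: "category K" and k: "faithful_functor K C ko km"
  shows "iso_over K ko km (H_cat C (fiber_obj K ko) (fiber_rel K km)) fst hMor"
proof (rule iso_overI[OF K is_functor_H_comparison[OF K] _ bij_betw_H_comparison_mor[OF K k]])
  show "is_functor K C ko km" using k by (simp add: faithful_functor_def)
  show "bij_betw (\<lambda>x. (ko x, x)) (cObj K) (cObj (H_cat C (fiber_obj K ko) (fiber_rel K km)))"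
    using k unfolding bij_betw_def faithful_functor_def is_functor_def H_cat_simps fiber_obj_def
    by (auto intro: inj_onI)
qed (simp_all add: H_comparison_mor_def hMor_def)

theorem mainTheorem5:
  fixes C :: "('o, 'm) cat"
  assumes "category C"
  shows
    "(\<forall>(So :: 'o \<Rightarrow> 'a set) Sm. lax_functor C So Sm \<longrightarrow>
        category (H_cat C So Sm) \<and>
        faithful_functor (H_cat C So Sm) C fst hMor \<and>
        (\<forall>e\<in>cObj C. fiber_obj (H_cat C So Sm) fst e = Pair e ` So e) \<and>
        (\<forall>g\<in>cMor C. fiber_rel (H_cat C So Sm) hMor g =
            (\<lambda>(s, s'). ((cDom C g, s), (cCod C g, s'))) ` Sm g))
     \<and>
     (\<forall>(So :: 'o \<Rightarrow> 'a set) Sm To Tm.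
        lax_functor C So Sm \<and> lax_functor C To Tm \<and> H_cat C So Sm = H_cat C To Tm \<longrightarrow>
        (\<forall>e\<in>cObj C. So e = To e) \<and> (\<forall>g\<in>cMor C. Sm g = Tm g))
     \<and>
     (\<forall>(K :: ('p, 'n) cat) ko km. category K \<and> faithful_functor K C ko km \<longrightarrow>
        lax_functor C (fiber_obj K ko) (fiber_rel K km) \<and>
        iso_over K ko km (H_cat C (fiber_obj K ko) (fiber_rel K km)) fst hMor)"
proof (intro conjI allI impI ballI; (elim conjE)?)
  fix So :: "'o \<Rightarrow> 'a set" and Sm
  assume S: "lax_functor C So Sm"
  show "category (H_cat C So Sm)" using assms S by (rule category_H_cat)
  show "faithful_functor (H_cat C So Sm) C fst hMor" using assms by (rule faithful_functor_hMor)
  show "fiber_obj (H_cat C So Sm) fst e = Pair e ` So e" if "e \<in> cObj C" for e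
    using that by (rule fiber_obj_H_cat)
  show "fiber_rel (H_cat C So Sm) hMor g = (\<lambda>(s, s'). ((cDom C g, s), (cCod C g, s'))) ` Sm g"
    if "g \<in> cMor C" for g
    using S that by (rule fiber_rel_H_cat)
next
  fix So To :: "'o \<Rightarrow> 'a set" and Sm Tm e g
  assume S: "lax_functor C So Sm" and T: "lax_functor C To Tm" and eq: "H_cat C So Sm = H_cat C To Tm"
  show "So e = To e" if "e \<in> cObj C" using eq that by (rule H_cat_inject_obj)
  show "Sm g = Tm g" if "g \<in> cMor C" using S T eq that by (rule H_cat_inject_rel)
next
  fix K :: "('p, 'n) cat" and ko km
  assume K: "category K" and k: "faithful_functor K C ko km"
  show "lax_functor C (fiber_obj K ko) (fiber_rel K km)"
    using K k by (simp add: lax_functor_fibers faithful_functor_def)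
  show "iso_over K ko km (H_cat C (fiber_obj K ko) (fiber_rel K km)) fst hMor"
    using K k by (rule iso_over_H_cat_fibers)
qed

end
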